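(* (i) For any formula $A\in\mathcal{L}_\infty$ and any natural numbers $m,n$ both strictly greater than the index of every box occurring in $A$, $\mathbf{GL}_h\vdash\Box_mA\leftrightarrow\Box_nA$. (ii) For any formula $A$ of the ordinary unimodal language $\mathcal{L}_\Box$ and any witnesses $u,v$ for $A$, $\mathbf{GL}_h\vdash A(u)\rightarrow A(v)$.
   Context: The language $\mathcal{L}_\infty$ consists of modal formulas built from propositional atoms, $\bot,\top$, the connectives $\neg,\wedge,\vee,\rightarrow$ and unary modalities $\Box_n$ ($n\in\mathbb{N}$), with the restriction that $\Box_n A$ is a formula only if $n$ is strictly greater than the index of every box occurring in $A$. Axiom instances are only those that are $\mathcal{L}_\infty$-formulas. Axiom schemes (for all $n\ge0$): $\mathbf{H}$: $\Box_n A\rightarrow\Box_{n+1}A$; $\mathbf{K}_h$: $\Box_n(A\rightarrow B)\rightarrow(\Box_nA\rightarrow\Box_nB)$; $\mathbf{4}_h$: $\Box_nA\rightarrow\Box_{n+1}\Box_nA$; $\mathbf{L}_h$: $\Box_{n+1}(\Box_nA\rightarrow A)\rightarrow\Box_nA$. $\mathbf{GL}_h$ is the least set of $\mathcal{L}_\infty$-formulas containing all classical propositional tautologies and all instances of $\mathbf{H},\mathbf{K}_h,\mathbf{4}_h,\mathbf{L}_h$, closed under modus ponens and the rule: from $A$ infer $\Box_nA$ for any $n$ greater than all box indices in $A$. $\mathcal{L}_\Box$ is the usual modal language with one modality $\Box$ (same atoms). A witness for $A\in\mathcal{L}_\Box$ is an assignment of a natural number to each occurrence of $\Box$ in $A$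 such that the number assigned to each occurrence is strictly greater than the numbers assigned to all box occurrences inside its scope (formally: atoms have the empty witness $()$; $(w_1,w_2)$ is a witness for $B\circ C$ if $w_1,w_2$ are witnesses for $B,C$; a witness for $B$ is one for $\neg B$; $(n,w)$ is a witness for $\Box B$ if $w$ is a witness for $B$ and $n$ exceeds every number in $w$). For a witness $w$ of $A$, $A(w)\in\mathcal{L}_\infty$ is obtained by replacing each occurrence of $\Box$ by $\Box_n$, where $n$ is the number assigned to that occurrence. *)

theory Defs
  imports Main
begin

datatype hform =
    HAtom nat
  | HBot
  | HTop
  | HNeg hform
  | HAnd hform hform
  | HOr hform hform
  | HImp hform hform
  | HBox nat hform

definition HIff :: "hform \<Rightarrow> hform \<Rightarrow> hform" where
  "HIff A B = HAnd (HImp A B) (HImp B A)"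

fun boxes :: "hform \<Rightarrow> nat set" where
  "boxes (HAtom p) = {}"
| "boxes HBot = {}"
| "boxes HTop = {}"
| "boxes (HNeg A) = boxes A"
| "boxes (HAnd A B) = boxes A \<union> boxes B"
| "boxes (HOr A B) = boxes A \<union> boxes B"
| "boxes (HImp A B) = boxes A \<union> boxes B"
| "boxes (HBox n A) = insert n (boxes A)"

definition above :: "nat \<Rightarrow> hform \<Rightarrow> bool" where
  "above n A \<longleftrightarrow> (\<forall>k \<in> boxes A. k < n)"

fun wf :: "hform \<Rightarrow> bool" where
  "wf (HAtom p) = True"
| "wf HBot = True"
| "wf HTop = True"
| "wf (HNeg A) = wf A"
| "wf (HAnd A B) = (wf A \<and> wf B)"
| "wf (HOr A B) = (wf A \<and> wf B)"
| "wf (HImp A B) = (wf A \<and> wf B)"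
| "wf (HBox n A) = (wf A \<and> above n A)"

text \<open>Classical propositional evaluation, treating atoms and boxed formulas as
  propositional variables.\<close>
fun peval :: "(hform \<Rightarrow> bool) \<Rightarrow> hform \<Rightarrow> bool" where
  "peval v (HAtom p) = v (HAtom p)"
| "peval v HBot = False"
| "peval v HTop = True"
| "peval v (HNeg A) = (\<not> peval v A)"
| "peval v (HAnd A B) = (peval v A \<and> peval v B)"
| "peval v (HOr A B) = (peval v A \<or> peval v B)"
| "peval v (HImp A B) = (peval v A \<longrightarrow> peval v B)"
| "peval v (HBox n A) = v (HBox n A)"

definition taut :: "hform \<Rightarrow> bool" where
  "taut A \<longleftrightarrow> (\<forall>v. peval v A)"

inductive GLh :: "hform \<Rightarrow> bool" where
  Taut: "\<lbrakk>wf A; taut A\<rbrakk> \<Longrightarrow> GLh A"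
| AxH: "wf (HImp (HBox n A) (HBox (Suc n) A)) \<Longrightarrow> GLh (HImp (HBox n A) (HBox (Suc n) A))"
| AxK: "wf (HImp (HBox n (HImp A B)) (HImp (HBox n A) (HBox n B))) \<Longrightarrow>
        GLh (HImp (HBox n (HImp A B)) (HImp (HBox n A) (HBox n B)))"
| Ax4: "wf (HImp (HBox n A) (HBox (Suc n) (HBox n A))) \<Longrightarrow>
        GLh (HImp (HBox n A) (HBox (Suc n) (HBox n A)))"
| AxL: "wf (HImp (HBox (Suc n) (HImp (HBox n A) A)) (HBox n A)) \<Longrightarrow>
        GLh (HImp (HBox (Suc n) (HImp (HBox n A) A)) (HBox n A))"
| MP: "\<lbrakk>GLh (HImp A B); GLh A\<rbrakk> \<Longrightarrow> GLh B"
| Nec: "\<lbrakk>GLh A; above n A\<rbrakk> \<Longrightarrow> GLh (HBox n A)"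

datatype mform =
    MAtom nat
  | MBot
  | MTop
  | MNeg mform
  | MAnd mform mform
  | MOr mform mform
  | MImp mform mform
  | MBox mform

text \<open>Witness trees: () for atoms/constants, pairs for binary connectives,
  (n, w) for boxes; negation reuses the witness of its argument.\<close>
datatype wit = WUnit | WPair wit wit | WBox nat wit

fun wnums :: "wit \<Rightarrow> nat set" where
  "wnums WUnit = {}"
| "wnums (WPair w1 w2) = wnums w1 \<union> wnums w2"
| "wnums (WBox n w) = insert n (wnums w)"

fun is_witness :: "wit \<Rightarrow> mform \<Rightarrow> bool" where
  "is_witness WUnit (MAtom p) = True"
| "is_witness WUnit MBot = True"
| "is_witness WUnit MTop = True"
| "is_witness w (MNeg A) = is_witness w A"
| "is_witness (WPair w1 w2) (MAnd A B) = (is_witness w1 A \<and> is_witness w2 B)"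
| "is_witness (WPair w1 w2) (MOr A B) = (is_witness w1 A \<and> is_witness w2 B)"
| "is_witness (WPair w1 w2) (MImp A B) = (is_witness w1 A \<and> is_witness w2 B)"
| "is_witness (WBox n w) (MBox A) = (is_witness w A \<and> (\<forall>k \<in> wnums w. k < n))"
| "is_witness _ _ = False"

text \<open>A(w): the L_infinity formula obtained by labelling boxes along w
  (meaningful when w is a witness for A).\<close>
fun inst :: "mform \<Rightarrow> wit \<Rightarrow> hform" where
  "inst (MAtom p) w = HAtom p"
| "inst MBot w = HBot"
| "inst MTop w = HTop"
| "inst (MNeg A) w = HNeg (inst A w)"
| "inst (MAnd A B) (WPair w1 w2) = HAnd (inst A w1) (inst B w2)"
| "inst (MOr A B) (WPair w1 w2) = HOr (inst A w1) (inst B w2)"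
| "inst (MImp A B) (WPair w1 w2) = HImp (inst A w1) (inst B w2)"
| "inst (MBox A) (WBox n w) = HBox n (inst A w)"
| "inst _ _ = HBot"

end

theory Submission
  imports Defs
begin

text \<open>Part (i): axiom \<open>H\<close> moves a box index up by one; conversely, \<open>\<Box>\<^bsub>k+1\<^esub> A\<close> gives
  \<open>\<Box>\<^bsub>k+1\<^esub> (\<Box>\<^sub>k A \<rightarrow> A)\<close> by monotonicity, and axiom \<open>L\<close> turns this into \<open>\<Box>\<^sub>k A\<close>.
  Iterating both steps connects any two admissible indices.
  Part (ii) then follows by induction on the unimodal formula: at a box with labels
  \<open>n\<close> and \<open>m\<close>, pass through the common index \<open>max n m\<close> and use the induction
  hypothesis under that box.\<close>

lemma GLh_wf: "GLh A \<Longrightarrow> wf A"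
  by (induction rule: GLh.induct) auto

lemma GLh_taut_consequence:
  assumes "\<forall>X\<in>set Xs. GLh X" and "wf Y"
    and "\<forall>v. (\<forall>X\<in>set Xs. peval v X) \<longrightarrow> peval v Y"
  shows "GLh Y"
  using assms
proof (induction Xs arbitrary: Y)
  case Nil
  then show ?case by (intro GLh.Taut) (auto simp: taut_def)
next
  case (Cons X Xs)
  have "GLh (HImp X Y)"
    using Cons.prems by (intro Cons.IH) (auto dest: GLh_wf)
  then show ?case using Cons.prems by (auto intro: GLh.MP)
qed

lemma GLh_imp_refl: "wf A \<Longrightarrow> GLh (HImp A A)"
  by (rule GLh_taut_consequence[of "[]"]) auto

lemma GLh_imp_trans:
  assumes "GLh (HImp A B)" and "GLh (HImp B C)"
  shows "GLh (HImp A C)"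
  by (rule GLh_taut_consequence[of "[HImp A B, HImp B C]"]) (use assms in \<open>auto dest: GLh_wf\<close>)

lemma above_mono: "above m A \<Longrightarrow> m \<le> k \<Longrightarrow> above k A"
  unfolding above_def by auto

lemma GLh_box_mono:
  assumes "GLh (HImp A B)" and "above n A" and "above n B"
  shows "GLh (HImp (HBox n A) (HBox n B))"
proof -
  have "wf A" "wf B" using GLh_wf[OF assms(1)] by auto
  then have "GLh (HImp (HBox n (HImp A B)) (HImp (HBox n A) (HBox n B)))"
    using assms(2,3) by (intro GLh.AxK) (auto simp: above_def)
  moreover have "GLh (HBox n (HImp A B))"
    using assms by (intro GLh.Nec) (auto simp: above_def)
  ultimately show ?thesis by (rule GLh.MP)
qed

lemma GLh_box_Suc_imp_box:
  assumes "wf A" and "above k A"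
  shows "GLh (HImp (HBox (Suc k) A) (HBox k A))"
proof -
  have above_Suc: "above (Suc k) A" using assms(2) above_mono by auto
  have "GLh (HImp A (HImp (HBox k A) A))"
    using assms by (intro GLh.Taut) (auto simp: taut_def)
  then have "GLh (HImp (HBox (Suc k) A) (HBox (Suc k) (HImp (HBox k A) A)))"
    using assms above_Suc by (intro GLh_box_mono) (auto simp: above_def)
  moreover have "GLh (HImp (HBox (Suc k) (HImp (HBox k A) A)) (HBox k A))"
    using assms above_Suc by (intro GLh.AxL) (auto simp: above_def)
  ultimately show ?thesis by (rule GLh_imp_trans)
qed

lemma GLh_box_imp_box_Suc:
  assumes "wf A" and "above k A"
  shows "GLh (HImp (HBox k A) (HBox (Suc k) A))"
  using assms above_mono[of k A "Suc k"] by (intro GLh.AxH) auto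

lemma GLh_box_raise:
  assumes "wf A" and "above m A" and "m \<le> n"
  shows "GLh (HImp (HBox m A) (HBox n A))"
  using assms(3)
proof (induction n rule: dec_induct)
  case base
  show ?case using assms by (intro GLh_imp_refl) simp
next
  case (step k)
  then have "above k A" using assms(2) above_mono by auto
  with assms(1) have "GLh (HImp (HBox k A) (HBox (Suc k) A))" by (rule GLh_box_imp_box_Suc)
  with step.IH show ?case by (rule GLh_imp_trans)
qed

lemma GLh_box_lower:
  assumes "wf A" and "above m A" and "m \<le> n"
  shows "GLh (HImp (HBox n A) (HBox m A))"
  using assms(3)
proof (induction n rule: dec_induct)
  case base
  show ?case using assms by (intro GLh_imp_refl) simp
next
  case (step k)
  then have "above k A" using assms(2) above_mono by auto
  with assms(1) have "GLh (HImp (HBox (Suc k) A) (HBox k A))" by (rule GLh_box_Suc_imp_box)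
  then show ?case using step.IH by (rule GLh_imp_trans)
qed

lemma GLh_box_imp_box:
  assumes "wf A" and "above m A" and "above n A"
  shows "GLh (HImp (HBox m A) (HBox n A))"
  using assms GLh_box_raise GLh_box_lower by (cases "m \<le> n") auto

lemma wf_inst_and_boxes_inst:
  "is_witness w A \<Longrightarrow> wf (inst A w) \<and> boxes (inst A w) \<subseteq> wnums w"
proof (induction A arbitrary: w)
  case (MAnd A B)
  then show ?case by (cases w) auto
next
  case (MOr A B)
  then show ?case by (cases w) auto
next
  case (MImp A B)
  then show ?case by (cases w) auto
next
  case (MBox A)
  then show ?case by (cases w) (auto simp: above_def)
qed (cases w; auto)+

lemma GLh_box_inst_imp_box_inst:
  assumes "is_witness (WBox n u) (MBox A)" and "is_witness (WBox m v) (MBox A)"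
    and "GLh (HImp (inst A u) (inst A v))"
  shows "GLh (HImp (HBox n (inst A u)) (HBox m (inst A v)))"
proof -
  define X Y where "X = inst A u" and "Y = inst A v"
  have "wf X" "above n X" "above (max n m) X"
    using assms(1) wf_inst_and_boxes_inst[of u A]
    by (auto simp: X_def above_def less_max_iff_disj)
  moreover have "wf Y" "above m Y" "above (max n m) Y"
    using assms(2) wf_inst_and_boxes_inst[of v A]
    by (auto simp: Y_def above_def less_max_iff_disj)
  ultimately have "GLh (HImp (HBox n X) (HBox (max n m) X))"
    and "GLh (HImp (HBox (max n m) X) (HBox (max n m) Y))"
    and "GLh (HImp (HBox (max n m) Y) (HBox m Y))"
    using assms(3) by (simp_all add: X_def Y_def GLh_box_imp_box GLh_box_mono)
  then show ?thesis unfolding X_def Y_def by (meson GLh_imp_trans)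
qed

lemma GLh_inst_imp_inst:
  "is_witness u A \<Longrightarrow> is_witness v A \<Longrightarrow> GLh (HImp (inst A u) (inst A v))"
proof (induction A arbitrary: u v)
  case (MNeg A)
  then have "GLh (HImp (inst A v) (inst A u))" by simp
  then show ?case
    by (intro GLh_taut_consequence[of "[HImp (inst A v) (inst A u)]"]) (auto dest: GLh_wf)
next
  case (MAnd A B)
  then obtain u1 u2 v1 v2 where uv: "u = WPair u1 u2" "v = WPair v1 v2"
    by (cases u; cases v) auto
  with MAnd have "GLh (HImp (inst A u1) (inst A v1))" "GLh (HImp (inst B u2) (inst B v2))"
    by auto
  then show ?case using uv
    by (intro GLh_taut_consequence[of "[HImp (inst A u1) (inst A v1), HImp (inst B u2) (inst B v2)]"])
       (auto dest: GLh_wf)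
next
  case (MOr A B)
  then obtain u1 u2 v1 v2 where uv: "u = WPair u1 u2" "v = WPair v1 v2"
    by (cases u; cases v) auto
  with MOr have "GLh (HImp (inst A u1) (inst A v1))" "GLh (HImp (inst B u2) (inst B v2))"
    by auto
  then show ?case using uv
    by (intro GLh_taut_consequence[of "[HImp (inst A u1) (inst A v1), HImp (inst B u2) (inst B v2)]"])
       (auto dest: GLh_wf)
next
  case (MImp A B)
  then obtain u1 u2 v1 v2 where uv: "u = WPair u1 u2" "v = WPair v1 v2"
    by (cases u; cases v) auto
  with MImp have "GLh (HImp (inst A v1) (inst A u1))" "GLh (HImp (inst B u2) (inst B v2))"
    by auto
  then show ?case using uv
    by (intro GLh_taut_consequence[of "[HImp (inst A v1) (inst A u1), HImp (inst B u2) (inst B v2)]"])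
       (auto dest: GLh_wf)
next
  case (MBox A)
  then obtain n u' m v' where uv: "u = WBox n u'" "v = WBox m v'"
    by (cases u; cases v) auto
  with MBox.prems have "GLh (HImp (inst A u') (inst A v'))" by (intro MBox.IH) auto
  with MBox.prems show ?case unfolding uv by (simp add: GLh_box_inst_imp_box_inst)
qed (auto intro: GLh_imp_refl)

theorem lemma3p12:
  shows "(\<forall>A m n. wf A \<and> above m A \<and> above n A \<longrightarrow> GLh (HIff (HBox m A) (HBox n A)))
       \<and> (\<forall>A u v. is_witness u A \<and> is_witness v A \<longrightarrow> GLh (HImp (inst A u) (inst A v)))"
proof (intro conjI allI impI)
  fix A m n assume "wf A \<and> above m A \<and> above n A"
  then have "GLh (HImp (HBox m A) (HBox n A))" "GLh (HImp (HBox n A) (HBox m A))"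
    using GLh_box_imp_box by auto
  then show "GLh (HIff (HBox m A) (HBox n A))"
    by (intro GLh_taut_consequence[of "[HImp (HBox m A) (HBox n A), HImp (HBox n A) (HBox m A)]"])
       (auto simp: HIff_def dest: GLh_wf)
next
  fix A u v assume "is_witness u A \<and> is_witness v A"
  then show "GLh (HImp (inst A u) (inst A v))" using GLh_inst_imp_inst by auto
qed

end
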